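(* $\mathbb F_0=\mathbb F_{\sqrt{1+x^2}}$.
   Context: An origami pair is a pair $(\mathcal P,\mathcal L)$ where $\mathcal P\subset\mathbb R^2$ is a set of points and $\mathcal L$ is a collection of lines in $\mathbb R^2$ such that: (i) the intersection point of any two non-parallel lines of $\mathcal L$ lies in $\mathcal P$; (ii) for any two distinct points of $\mathcal P$, the line through them is in $\mathcal L$; (iii) for any two distinct points of $\mathcal P$, the perpendicular bisector of the segment joining them is in $\mathcal L$; (iv) if $L_1,L_2\in\mathcal L$, then every line equidistant from $L_1$ and $L_2$ is in $\mathcal L$ (the midline if they are parallel, the angle bisectors if they intersect); (v) if $L_1,L_2\in\mathcal L$, then the mirror reflection of $L_2$ across $L_1$ is in $\mathcal L$. A set $\mathcal P\subset\mathbb R^2$ is closed under origami constructions if there is a collection of lines $\mathcal L$ with $(\mathcal P,\mathcal L)$ an origami pair. The set of origami constructible points is $\mathcal P_0=\bigcap\{\mathcal P : (0,0),(0,1)\in\mathcal P \text{ and } \mathcal P \text{ is closed under origami constructions}\}$. The set of origami numbers is $\mathbb F_0=\{\alpha\in\mathbb R : \exists v_1,v_2\in\mathcal P_0,\ |\alpha|=\operatorname{dist}(v_1,v_2)\}$. $\mathbb F_{\sqrt{1+x^2}}$ denotes the smallest subfield of $\mathbb C$ that, together with any element $x$, contains a square root of $1+x^2$ (equivalently both square roots, since fields are closed under negation). *)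

theory Defs
  imports "HOL-Analysis.Analysis"
begin

text \<open>Points of the plane are pairs of reals; dist on real \<times> real is Euclidean.
  A line is a set of the form {(x,y). a x + b y = c} with (a,b) \<noteq> (0,0).\<close>

type_synonym point = "real \<times> real"

definition is_line :: "point set \<Rightarrow> bool" where
  "is_line L \<longleftrightarrow> (\<exists>a b c. (a, b) \<noteq> (0, 0) \<and> L = {(x, y). a * x + b * y = c})"

definition line_through :: "point \<Rightarrow> point \<Rightarrow> point set" where
  "line_through p q = {(x, y). (fst q - fst p) * (y - snd p) = (snd q - snd p) * (x - fst p)}"

definition perp_bisector :: "point \<Rightarrow> point \<Rightarrow> point set" where
  "perp_bisector p q = {z. dist z p = dist z q}"

definition mirror_point :: "point set \<Rightarrow> point \<Rightarrow> point \<Rightarrow> bool" where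
  "mirror_point L z w \<longleftrightarrow> (z \<in> L \<and> w = z) \<or> (z \<noteq> w \<and> L = perp_bisector z w)"

definition reflect_line :: "point set \<Rightarrow> point set \<Rightarrow> point set" where
  "reflect_line L1 L2 = {w. \<exists>z\<in>L2. mirror_point L1 z w}"

text \<open>A line equidistant from two distinct lines L1, L2: all of its points are at equal
  distance from L1 and L2 (the midline if parallel, the angle bisectors if they meet).\<close>
definition equidistant_line :: "point set \<Rightarrow> point set \<Rightarrow> point set \<Rightarrow> bool" where
  "equidistant_line L1 L2 L \<longleftrightarrow> is_line L \<and> (\<forall>z\<in>L. infdist z L1 = infdist z L2)"

definition origami_pair :: "point set \<Rightarrow> point set set \<Rightarrow> bool" where
  "origami_pair P \<L> \<longleftrightarrow>
     (\<forall>L\<in>\<L>. is_line L) \<and>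
     (\<forall>L1\<in>\<L>. \<forall>L2\<in>\<L>. \<forall>p. L1 \<inter> L2 = {p} \<longrightarrow> p \<in> P) \<and>
     (\<forall>p\<in>P. \<forall>q\<in>P. p \<noteq> q \<longrightarrow> line_through p q \<in> \<L>) \<and>
     (\<forall>p\<in>P. \<forall>q\<in>P. p \<noteq> q \<longrightarrow> perp_bisector p q \<in> \<L>) \<and>
     (\<forall>L1\<in>\<L>. \<forall>L2\<in>\<L>. \<forall>L. L1 \<noteq> L2 \<and> equidistant_line L1 L2 L \<longrightarrow> L \<in> \<L>) \<and>
     (\<forall>L1\<in>\<L>. \<forall>L2\<in>\<L>. reflect_line L1 L2 \<in> \<L>)"

definition origami_closed :: "point set \<Rightarrow> bool" where
  "origami_closed P \<longleftrightarrow> (\<exists>\<L>. origami_pair P \<L>)"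

definition origami_points :: "point set" where
  "origami_points = \<Inter>{P. (0, 0) \<in> P \<and> (0, 1) \<in> P \<and> origami_closed P}"

definition origami_numbers :: "real set" where
  "origami_numbers = {\<alpha>. \<exists>v1\<in>origami_points. \<exists>v2\<in>origami_points. \<bar>\<alpha>\<bar> = dist v1 v2}"

definition is_subfield :: "complex set \<Rightarrow> bool" where
  "is_subfield F \<longleftrightarrow> 0 \<in> F \<and> 1 \<in> F \<and>
     (\<forall>x\<in>F. \<forall>y\<in>F. x + y \<in> F \<and> x - y \<in> F \<and> x * y \<in> F) \<and>
     (\<forall>x\<in>F. x \<noteq> 0 \<longrightarrow> inverse x \<in> F)"

definition F_sqrt_1_plus_sq :: "complex set" where
  "F_sqrt_1_plus_sq = \<Inter>{F. is_subfield F \<and> (\<forall>x\<in>F. \<exists>y\<in>F. y\<^sup>2 = 1 + x\<^sup>2)}"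

end

theory Submission
  imports Defs
begin

text \<open>
  The origami numbers form the smallest subfield of \<open>\<real>\<close> closed under \<open>x \<mapsto> sqrt (1 + x\<^sup>2)\<close>
  (a real Pythagorean field), and \<open>F_sqrt_1_plus_sq\<close> is the image of that field in \<open>\<complex>\<close>.

  If \<open>P\<close> is closed under origami constructions and contains \<open>(0, 0)\<close> and \<open>(0, 1)\<close>, then the
  abscissas of the points of \<open>P\<close> on the \<open>x\<close>-axis form such a field: reflections in lines of
  the pair move points around, intersections with vertical lines give addition, multiplication
  and inversion by similar triangles, and reflecting \<open>(1, t)\<close> in the bisector of the angle
  between the \<open>x\<close>-axis and the line through \<open>0\<close> and \<open>(1, t)\<close> gives \<open>(sqrt (1 + t\<^sup>2), 0)\<close>.

  Conversely, for any such field \<open>K\<close> the points with coordinates in \<open>K\<close> and the lines with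
  equations over \<open>K\<close> form an origami pair: intersections follow from Cramer's rule and
  reflections are rational in the coefficients. Since \<open>sqrt (a\<^sup>2 + b\<^sup>2) = \<bar>a\<bar> sqrt (1 + (b/a)\<^sup>2)\<close>,
  equations can be normalised to unit normals, and then the angle bisectors of two lines are
  given by the sum and the difference of their equations.
\<close>

section \<open>Lines given by equations\<close>

definition line_eqn :: "real \<Rightarrow> real \<Rightarrow> real \<Rightarrow> point set" where
  "line_eqn a b c = {(x, y). a * x + b * y = c}"

lemma mem_line_eqn [simp]: "p \<in> line_eqn a b c \<longleftrightarrow> a * fst p + b * snd p = c"
  by (cases p) (simp add: line_eqn_def)

lemma is_line_line_eqn: "(a, b) \<noteq> (0, 0) \<Longrightarrow> is_line (line_eqn a b c)"
  unfolding is_line_def line_eqn_def by blast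

lemma is_lineE:
  assumes "is_line L"
  obtains a b c where "(a, b) \<noteq> (0, 0)" "L = line_eqn a b c"
  using assms unfolding is_line_def line_eqn_def by blast

lemma sum_squares_pos: "(a, b) \<noteq> (0::real, 0::real) \<Longrightarrow> 0 < a\<^sup>2 + b\<^sup>2"
  by (auto simp: sum_power2_gt_zero_iff)

lemma line_eqn_scale:
  assumes "k \<noteq> 0" shows "line_eqn (k * a) (k * b) (k * c) = line_eqn a b c"
proof -
  have "k * a * x + k * b * y = k * (a * x + b * y)" for x y
    by (simp add: algebra_simps)
  then show ?thesis
    using assms by (auto simp: line_eqn_def)
qed

lemma dist_point: "dist (z::point) p = sqrt ((fst z - fst p)\<^sup>2 + (snd z - snd p)\<^sup>2)"
  by (cases z; cases p) (simp add: dist_Pair_Pair dist_real_def)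

lemma line_through_eq:
  "line_through p q = line_eqn (snd q - snd p) (fst p - fst q)
     ((snd q - snd p) * fst p - (fst q - fst p) * snd p)"
  unfolding line_through_def line_eqn_def by (auto simp: algebra_simps)

lemma perp_bisector_eq:
  "perp_bisector p q = line_eqn (2 * (fst q - fst p)) (2 * (snd q - snd p))
     ((fst q)\<^sup>2 + (snd q)\<^sup>2 - (fst p)\<^sup>2 - (snd p)\<^sup>2)"
proof -
  have "dist z p = dist z q \<longleftrightarrow>
      (fst z - fst p)\<^sup>2 + (snd z - snd p)\<^sup>2 = (fst z - fst q)\<^sup>2 + (snd z - snd q)\<^sup>2" for z
    unfolding dist_point by simp
  then show ?thesis
    unfolding perp_bisector_def by (auto simp: power2_eq_square algebra_simps)
qed

lemma line_eqn_eq_range: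
  assumes "(a, b) \<noteq> (0, 0)"
  shows "line_eqn a b c =
    range (\<lambda>t. (c * a / (a\<^sup>2 + b\<^sup>2) - t * b, c * b / (a\<^sup>2 + b\<^sup>2) + t * a))"
proof -
  define N where "N = a\<^sup>2 + b\<^sup>2"
  have N: "N \<noteq> 0" using sum_squares_pos[OF assms] unfolding N_def by linarith
  have "z \<in> range (\<lambda>t. (c * a / N - t * b, c * b / N + t * a))"
    if "z \<in> line_eqn a b c" for z
  proof -
    have c: "c = a * fst z + b * snd z" using that by simp
    define t where "t = (a * snd z - b * fst z) / N"
    have "c * a / N - t * b = (c * a - (a * snd z - b * fst z) * b) / N"
      using N by (simp add: t_def field_simps)
    also have "\<dots> = fst z * N / N"
      unfolding c N_def by (simp add: power2_eq_square algebra_simps)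
    finally have x: "c * a / N - t * b = fst z" using N by simp
    have "c * b / N + t * a = (c * b + (a * snd z - b * fst z) * a) / N"
      using N by (simp add: t_def field_simps)
    also have "\<dots> = snd z * N / N"
      unfolding c N_def by (simp add: power2_eq_square algebra_simps)
    finally have y: "c * b / N + t * a = snd z" using N by simp
    have "z = (c * a / N - t * b, c * b / N + t * a)" using x y by simp
    then show ?thesis by (rule range_eqI)
  qed
  moreover have "a * (c * a / N - t * b) + b * (c * b / N + t * a) = c" for t
  proof -
    have "a * (c * a / N - t * b) + b * (c * b / N + t * a) = c * (a * a + b * b) / N"
      using N by (simp add: field_simps)
    also have "\<dots> = c" using N by (simp add: N_def power2_eq_square)
    finally show ?thesis .
  qed
  ultimately show ?thesis unfolding N_def[symmetric] by auto
qed

lemma line_eqn_nonempty: "(a, b) \<noteq> (0, 0) \<Longrightarrow> line_eqn a b c \<noteq> {}"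
  using line_eqn_eq_range by simp

lemma affine_functions_cover_zero:
  fixes \<alpha>1 \<beta>1 \<alpha>2 \<beta>2 :: real
  assumes "\<And>t. \<alpha>1 + \<beta>1 * t = 0 \<or> \<alpha>2 + \<beta>2 * t = 0"
  shows "(\<alpha>1 = 0 \<and> \<beta>1 = 0) \<or> (\<alpha>2 = 0 \<and> \<beta>2 = 0)"
  using assms[of 0] assms[of 1] assms[of "-1"] by linarith

lemma linear_form_along_param:
  fixes a b c A B C N t :: real
  shows "A * (c * a / N - t * b) + B * (c * b / N + t * a) - C =
     ((A * a + B * b) * c / N - C) + (B * a - A * b) * t"
  by (cases "N = 0") (simp_all add: field_simps)

lemma line_eqn_subset_imp_proportional:
  assumes ab: "(a, b) \<noteq> (0, 0)" and sub: "line_eqn a b c \<subseteq> line_eqn A B C"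
  shows "\<exists>s. A = s * a \<and> B = s * b \<and> C = s * c"
proof -
  define N where "N = a\<^sup>2 + b\<^sup>2"
  have N: "N \<noteq> 0" using sum_squares_pos[OF ab] unfolding N_def by linarith
  have "A * (c * a / N - t * b) + B * (c * b / N + t * a) - C = 0" for t
    using sub unfolding line_eqn_eq_range[OF ab] N_def by (simp add: image_subset_iff)
  then have "(A * a + B * b) * c / N - C + (B * a - A * b) * t = 0" for t
    by (simp only: linear_form_along_param)
  from this[of 0] this[of 1] have C: "C = (A * a + B * b) * c / N" and Ba: "B * a = A * b"
    by simp_all
  define s where "s = (A * a + B * b) / N"
  have sN: "s * N = A * a + B * b" using N by (simp add: s_def)
  have "s * a * N = A * N" "s * b * N = B * N"
    using sN Ba unfolding N_def by algebra+
  then have "A = s * a" "B = s * b" using N by simp_all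
  moreover have "C = s * c" using C by (simp add: s_def)
  ultimately show ?thesis by blast
qed

lemma line_eqn_subset_imp_eq:
  assumes "(a, b) \<noteq> (0, 0)" "(A, B) \<noteq> (0, 0)" "line_eqn a b c \<subseteq> line_eqn A B C"
  shows "line_eqn A B C = line_eqn a b c"
proof -
  obtain s where s: "A = s * a" "B = s * b" "C = s * c"
    using line_eqn_subset_imp_proportional[OF assms(1,3)] by blast
  then have "s \<noteq> 0" using assms(2) by auto
  then show ?thesis using s line_eqn_scale by simp
qed

lemma line_eqn_subset_Un:
  assumes ab: "(a, b) \<noteq> (0, 0)"
    and sub: "line_eqn a b c \<subseteq> line_eqn A1 B1 C1 \<union> line_eqn A2 B2 C2"
  shows "line_eqn a b c \<subseteq> line_eqn A1 B1 C1 \<or> line_eqn a b c \<subseteq> line_eqn A2 B2 C2"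
proof -
  define N where "N = a\<^sup>2 + b\<^sup>2"
  define p where "p t = (c * a / N - t * b, c * b / N + t * a)" for t
  define \<alpha> where "\<alpha> A B C = (A * a + B * b) * c / N - C" for A B C
  define \<beta> where "\<beta> A B = B * a - A * b" for A B
  have range: "line_eqn a b c = range p"
    unfolding line_eqn_eq_range[OF ab] p_def N_def ..
  have along: "p t \<in> line_eqn A B C \<longleftrightarrow> \<alpha> A B C + \<beta> A B * t = 0" for A B C t
    using linear_form_along_param[of A c a N t b B C]
    unfolding p_def \<alpha>_def \<beta>_def by auto
  have "\<alpha> A1 B1 C1 + \<beta> A1 B1 * t = 0 \<or> \<alpha> A2 B2 C2 + \<beta> A2 B2 * t = 0" for t
    using sub unfolding range by (auto simp: image_subset_iff simp flip: along)
  then have "(\<alpha> A1 B1 C1 = 0 \<and> \<beta> A1 B1 = 0) \<or> (\<alpha> A2 B2 C2 = 0 \<and> \<beta> A2 B2 = 0)"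
    by (rule affine_functions_cover_zero)
  then have "(\<forall>t. p t \<in> line_eqn A1 B1 C1) \<or> (\<forall>t. p t \<in> line_eqn A2 B2 C2)"
    unfolding along by auto
  then show ?thesis unfolding range image_subset_iff by blast
qed

lemma line_eqn_Int_eq_singleton:
  assumes ab1: "(a1, b1) \<noteq> (0, 0)" and I: "line_eqn a1 b1 c1 \<inter> line_eqn a2 b2 c2 = {p}"
  shows "a1 * b2 - a2 * b1 \<noteq> 0"
    and "p = ((c1 * b2 - c2 * b1) / (a1 * b2 - a2 * b1), (a1 * c2 - a2 * c1) / (a1 * b2 - a2 * b1))"
proof -
  have e1: "a1 * fst p + b1 * snd p = c1" and e2: "a2 * fst p + b2 * snd p = c2"
    using I by auto
  show D: "a1 * b2 - a2 * b1 \<noteq> 0"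
  proof
    assume D: "a1 * b2 - a2 * b1 = 0"
    define q where "q = (fst p - b1, snd p + a1)"
    have "q \<in> line_eqn a1 b1 c1" "q \<in> line_eqn a2 b2 c2"
      using e1 e2 D by (simp_all add: q_def algebra_simps)
    then have "q = p" using I by blast
    then show False using ab1 by (simp add: q_def prod_eq_iff)
  qed
  have "fst p * (a1 * b2 - a2 * b1) = c1 * b2 - c2 * b1"
    "snd p * (a1 * b2 - a2 * b1) = a1 * c2 - a2 * c1"
    by (simp_all flip: e1 e2 add: algebra_simps)
  then show "p = ((c1 * b2 - c2 * b1) / (a1 * b2 - a2 * b1), (a1 * c2 - a2 * c1) / (a1 * b2 - a2 * b1))"
    using D by (simp add: prod_eq_iff eq_divide_eq)
qed

lemma line_through_Int_singleton:
  assumes "p \<noteq> q" "p \<noteq> r"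
    and det: "(fst q - fst p) * (snd r - snd p) - (snd q - snd p) * (fst r - fst p) \<noteq> 0"
  shows "line_through p q \<inter> line_through p r = {p}"
proof -
  have "z = p" if "z \<in> line_through p q" "z \<in> line_through p r" for z
  proof -
    define u v where "u = fst z - fst p" and "v = snd z - snd p"
    have "(fst q - fst p) * v = (snd q - snd p) * u" "(fst r - fst p) * v = (snd r - snd p) * u"
      using that by (auto simp: line_through_def u_def v_def split: prod.splits)
    then have "u * ((fst q - fst p) * (snd r - snd p) - (snd q - snd p) * (fst r - fst p)) = 0"
      "v * ((fst q - fst p) * (snd r - snd p) - (snd q - snd p) * (fst r - fst p)) = 0"
      by algebra+
    then have "u = 0" "v = 0" using det by simp_all
    then show ?thesis by (simp add: u_def v_def prod_eq_iff)
  qed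
  moreover have "p \<in> line_through p q" "p \<in> line_through p r"
    by (auto simp: line_through_def)
  ultimately show ?thesis by blast
qed

lemma perp_bisector_on_x_axis:
  assumes "x \<noteq> y"
  shows "perp_bisector (x, 0) (y, 0) = line_eqn 1 0 ((x + y) / 2)"
proof -
  have c: "y\<^sup>2 + 0\<^sup>2 - x\<^sup>2 - 0\<^sup>2 = 2 * (y - x) * ((x + y) / 2)"
    by (simp add: power2_eq_square field_simps)
  have "perp_bisector (x, 0) (y, 0) =
      line_eqn (2 * (y - x)) (2 * (y - x) * 0) (2 * (y - x) * ((x + y) / 2))"
    unfolding perp_bisector_eq fst_conv snd_conv c by simp
  also have "\<dots> = line_eqn 1 0 ((x + y) / 2)"
    using line_eqn_scale[of "2 * (y - x)" 1 0 "(x + y) / 2"] assms by simp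
  finally show ?thesis .
qed

section \<open>Reflection in a line\<close>

definition reflect_point :: "real \<Rightarrow> real \<Rightarrow> real \<Rightarrow> point \<Rightarrow> point" where
  "reflect_point a b c p =
     (fst p - 2 * a * ((a * fst p + b * snd p - c) / (a\<^sup>2 + b\<^sup>2)),
      snd p - 2 * b * ((a * fst p + b * snd p - c) / (a\<^sup>2 + b\<^sup>2)))"

lemma reflect_point_fixed: "p \<in> line_eqn a b c \<Longrightarrow> reflect_point a b c p = p"
  by (simp add: reflect_point_def)

lemma reflect_point_scale:
  assumes "k \<noteq> 0"
  shows "reflect_point (k * a) (k * b) (k * c) = reflect_point a b c"
proof
  fix p
  have "(k * a)\<^sup>2 + (k * b)\<^sup>2 = k\<^sup>2 * (a\<^sup>2 + b\<^sup>2)"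
    "k * a * fst p + k * b * snd p - k * c = k * (a * fst p + b * snd p - c)"
    by (simp_all add: power2_eq_square algebra_simps)
  then show "reflect_point (k * a) (k * b) (k * c) p = reflect_point a b c p"
    using assms by (simp add: reflect_point_def power2_eq_square)
qed

lemma reflect_point_side:
  assumes "(a, b) \<noteq> (0, 0)"
  shows "a * fst (reflect_point a b c p) + b * snd (reflect_point a b c p) - c =
    - (a * fst p + b * snd p - c)"
proof -
  define t where "t = (a * fst p + b * snd p - c) / (a\<^sup>2 + b\<^sup>2)"
  have t: "(a\<^sup>2 + b\<^sup>2) * t = a * fst p + b * snd p - c"
    using assms by (simp add: t_def)
  have r: "reflect_point a b c p = (fst p - 2 * a * t, snd p - 2 * b * t)"
    by (simp add: reflect_point_def t_def)
  have "a * fst (reflect_point a b c p) + b * snd (reflect_point a b c p) - c =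
      (a * fst p + b * snd p - c) - 2 * ((a\<^sup>2 + b\<^sup>2) * t)"
    unfolding r by (simp add: power2_eq_square algebra_simps)
  then show ?thesis unfolding t by simp
qed

lemma reflect_point_involution:
  assumes "(a, b) \<noteq> (0, 0)"
  shows "reflect_point a b c (reflect_point a b c p) = p"
proof -
  define f where "f q = a * fst q + b * snd q - c" for q
  have r: "reflect_point a b c q =
      (fst q - 2 * a * (f q / (a\<^sup>2 + b\<^sup>2)), snd q - 2 * b * (f q / (a\<^sup>2 + b\<^sup>2)))" for q
    by (simp add: reflect_point_def f_def)
  have "f (reflect_point a b c p) = - f p"
    unfolding f_def by (rule reflect_point_side[OF assms])
  then show ?thesis unfolding r[of "reflect_point a b c p"] by (simp add: r)
qed

lemma reflect_point_perp_bisector: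
  assumes "z \<noteq> w"
  shows "reflect_point (2 * (fst w - fst z)) (2 * (snd w - snd z))
    ((fst w)\<^sup>2 + (snd w)\<^sup>2 - (fst z)\<^sup>2 - (snd z)\<^sup>2) z = w"
proof -
  define u v where "u = fst w - fst z" and "v = snd w - snd z"
  define d where "d = u\<^sup>2 + v\<^sup>2"
  have "d \<noteq> 0"
    using assms by (auto simp: d_def u_def v_def prod_eq_iff)
  have N: "(2 * u)\<^sup>2 + (2 * v)\<^sup>2 = 4 * d"
    by (simp add: d_def power2_eq_square)
  have f: "2 * u * fst z + 2 * v * snd z - ((fst w)\<^sup>2 + (snd w)\<^sup>2 - (fst z)\<^sup>2 - (snd z)\<^sup>2)
      = - d"
    by (simp add: d_def u_def v_def power2_eq_square algebra_simps)
  have "reflect_point (2 * u) (2 * v)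
      ((fst w)\<^sup>2 + (snd w)\<^sup>2 - (fst z)\<^sup>2 - (snd z)\<^sup>2) z =
      (fst z - 2 * (2 * u) * (- d / (4 * d)), snd z - 2 * (2 * v) * (- d / (4 * d)))"
    unfolding reflect_point_def N f ..
  also have "\<dots> = (fst z + u, snd z + v)" using \<open>d \<noteq> 0\<close> by simp
  finally show ?thesis by (simp add: u_def v_def)
qed

lemma perp_bisector_reflect_point:
  assumes ab: "(a, b) \<noteq> (0, 0)" and z: "z \<notin> line_eqn a b c"
  shows "perp_bisector z (reflect_point a b c z) = line_eqn a b c"
proof -
  define f where "f = a * fst z + b * snd z - c"
  define t where "t = f / (a\<^sup>2 + b\<^sup>2)"
  have t: "(a\<^sup>2 + b\<^sup>2) * t = f" using ab by (simp add: t_def)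
  have "t \<noteq> 0" using z ab by (simp add: t_def f_def)
  have r: "reflect_point a b c z = (fst z - 2 * a * t, snd z - 2 * b * t)"
    by (simp add: reflect_point_def t_def f_def)
  have "(fst z - 2 * a * t)\<^sup>2 + (snd z - 2 * b * t)\<^sup>2 - (fst z)\<^sup>2 - (snd z)\<^sup>2
      = - 4 * t * (a * fst z + b * snd z) + 4 * t * ((a\<^sup>2 + b\<^sup>2) * t)"
    by (simp add: power2_eq_square algebra_simps)
  also have "\<dots> = - 4 * t * c" unfolding t f_def by (simp add: algebra_simps)
  finally have C: "(fst z - 2 * a * t)\<^sup>2 + (snd z - 2 * b * t)\<^sup>2 - (fst z)\<^sup>2 - (snd z)\<^sup>2
    = - 4 * t * c" .
  have "perp_bisector z (reflect_point a b c z) =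
      line_eqn ((- 4 * t) * a) ((- 4 * t) * b) ((- 4 * t) * c)"
    unfolding perp_bisector_eq r fst_conv snd_conv C by (simp add: algebra_simps)
  also have "\<dots> = line_eqn a b c" by (rule line_eqn_scale) (use \<open>t \<noteq> 0\<close> in simp)
  finally show ?thesis .
qed

lemma mirror_point_line_eqn_iff:
  assumes ab: "(a, b) \<noteq> (0, 0)"
  shows "mirror_point (line_eqn a b c) z w \<longleftrightarrow> w = reflect_point a b c z"
proof
  assume "mirror_point (line_eqn a b c) z w"
  then consider "z \<in> line_eqn a b c" "w = z" | "z \<noteq> w" "line_eqn a b c = perp_bisector z w"
    unfolding mirror_point_def by blast
  then show "w = reflect_point a b c z"
  proof cases
    case 1
    then show ?thesis by (simp add: reflect_point_fixed)
  next
    case 2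
    then obtain s where s: "2 * (fst w - fst z) = s * a" "2 * (snd w - snd z) = s * b"
      "(fst w)\<^sup>2 + (snd w)\<^sup>2 - (fst z)\<^sup>2 - (snd z)\<^sup>2 = s * c"
      using line_eqn_subset_imp_proportional[OF ab] unfolding perp_bisector_eq
      by (metis order_refl)
    have "s \<noteq> 0" using 2(1) s(1,2) by (auto simp: prod_eq_iff)
    have "w = reflect_point (s * a) (s * b) (s * c) z"
      using reflect_point_perp_bisector[OF 2(1)] unfolding s by simp
    then show ?thesis using reflect_point_scale[OF \<open>s \<noteq> 0\<close>] by simp
  qed
next
  assume w: "w = reflect_point a b c z"
  show "mirror_point (line_eqn a b c) z w"
  proof (cases "z \<in> line_eqn a b c")
    case True
    then show ?thesis using w by (simp add: mirror_point_def reflect_point_fixed)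
  next
    case False
    then have "z \<noteq> w"
      using w reflect_point_side[OF ab, of c z] by auto
    then show ?thesis
      using perp_bisector_reflect_point[OF ab False] w by (simp add: mirror_point_def)
  qed
qed

lemma reflect_line_line_eqn:
  assumes "(a, b) \<noteq> (0, 0)"
  shows "reflect_line (line_eqn a b c) L = reflect_point a b c ` L"
  unfolding reflect_line_def mirror_point_line_eqn_iff[OF assms] by auto

lemma reflect_line_line_eqn_eq:
  fixes a b c a' b' c' :: real
  assumes ab: "(a, b) \<noteq> (0, 0)"
  defines "k \<equiv> (a * a' + b * b') / (a\<^sup>2 + b\<^sup>2)"
  shows "reflect_line (line_eqn a b c) (line_eqn a' b' c') =
    line_eqn (a' - 2 * k * a) (b' - 2 * k * b) (c' - 2 * k * c)"
proof -
  have "reflect_point a b c w \<in> line_eqn a' b' c' \<longleftrightarrow>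
      w \<in> line_eqn (a' - 2 * k * a) (b' - 2 * k * b) (c' - 2 * k * c)" for w
  proof -
    define t where "t = (a * fst w + b * snd w - c) / (a\<^sup>2 + b\<^sup>2)"
    have r: "reflect_point a b c w = (fst w - 2 * a * t, snd w - 2 * b * t)"
      by (simp add: reflect_point_def t_def)
    have kt: "(a * a' + b * b') * t = k * (a * fst w + b * snd w - c)"
      by (simp add: k_def t_def)
    have "reflect_point a b c w \<in> line_eqn a' b' c' \<longleftrightarrow>
        a' * fst w + b' * snd w - 2 * ((a * a' + b * b') * t) = c'"
      unfolding r by (simp add: algebra_simps)
    also have "\<dots> \<longleftrightarrow> w \<in> line_eqn (a' - 2 * k * a) (b' - 2 * k * b) (c' - 2 * k * c)"
      unfolding kt by (simp add: algebra_simps)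
    finally show ?thesis .
  qed
  moreover have "reflect_point a b c ` L = {w. reflect_point a b c w \<in> L}" for L
  proof (intro set_eqI iffI)
    fix w assume "w \<in> {w. reflect_point a b c w \<in> L}"
    then have "reflect_point a b c (reflect_point a b c w) \<in> reflect_point a b c ` L" by simp
    then show "w \<in> reflect_point a b c ` L" by (simp add: reflect_point_involution[OF ab])
  qed (auto simp: reflect_point_involution[OF ab])
  ultimately show ?thesis
    unfolding reflect_line_line_eqn[OF ab] by auto
qed

lemma reflect_line_line_eqn_nondegenerate:
  fixes a b a' b' :: real
  assumes ab: "(a, b) \<noteq> (0, 0)" and ab': "(a', b') \<noteq> (0, 0)"
  defines "k \<equiv> (a * a' + b * b') / (a\<^sup>2 + b\<^sup>2)"
  shows "(a' - 2 * k * a, b' - 2 * k * b) \<noteq> (0, 0)"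
proof
  assume "(a' - 2 * k * a, b' - 2 * k * b) = (0, 0)"
  then have a': "a' = 2 * k * a" and b': "b' = 2 * k * b" by auto
  have "k * (a\<^sup>2 + b\<^sup>2) = a * a' + b * b'" using ab by (simp add: k_def)
  also have "\<dots> = 2 * k * (a\<^sup>2 + b\<^sup>2)" unfolding a' b' by (simp add: power2_eq_square algebra_simps)
  finally have "k = 0" using ab by auto
  then show False using a' b' ab' by simp
qed

lemma reflect_point_vertical_line: "reflect_point 1 0 m (u, v) = (2 * m - u, v)"
  by (simp add: reflect_point_def)

lemma reflect_line_vertical_lines:
  "reflect_line (line_eqn 1 0 m) (line_eqn 1 0 n) = line_eqn 1 0 (2 * m - n)"
  using reflect_line_line_eqn_eq[of 1 0 m 1 0 n] line_eqn_scale[of "-1" 1 0 "2 * m - n"] by simp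

lemma reflect_point_onto_x_axis:
  assumes s: "s = sqrt (1 + t\<^sup>2)"
  shows "reflect_point (- t) (s + 1) 0 (1, t) = (s, 0)"
proof -
  have "s > 0" and s2: "s\<^sup>2 = 1 + t\<^sup>2" using s by (simp_all add: add_pos_nonneg)
  have N: "(- t)\<^sup>2 + (s + 1)\<^sup>2 = 2 * s * (s + 1)"
    using s2 by (simp add: power2_eq_square algebra_simps)
  have nz: "2 * s * (s + 1) \<noteq> 0" using \<open>s > 0\<close> by simp
  have "2 * t * (s * t) = (s - 1) * (2 * s * (s + 1))" using s2 by algebra
  then have "2 * t * (s * t) / (2 * s * (s + 1)) = s - 1" using nz by (simp add: divide_eq_eq)
  then have x: "1 - 2 * (- t) * (s * t / (2 * s * (s + 1))) = s" by (simp add: algebra_simps)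
  have "2 * (s + 1) * (s * t / (2 * s * (s + 1))) = t" using nz by (simp add: divide_eq_eq)
  then have y: "t - 2 * (s + 1) * (s * t / (2 * s * (s + 1))) = 0" by simp
  have "- t * 1 + (s + 1) * t - 0 = s * t" by (simp add: algebra_simps)
  then show ?thesis unfolding reflect_point_def fst_conv snd_conv N using x y by simp
qed

section \<open>Distance to a line and equidistant lines\<close>

lemma infdist_line_eqn:
  assumes unit: "a\<^sup>2 + b\<^sup>2 = 1"
  shows "infdist z (line_eqn a b c) = \<bar>a * fst z + b * snd z - c\<bar>"
proof -
  define f where "f = a * fst z + b * snd z - c"
  define p where "p = (fst z - f * a, snd z - f * b)"
  have "a * fst p + b * snd p = a * fst z + b * snd z - f * (a\<^sup>2 + b\<^sup>2)"
    by (simp add: p_def power2_eq_square algebra_simps)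
  then have p: "p \<in> line_eqn a b c" by (simp add: unit f_def)
  have "dist z p = sqrt (f\<^sup>2 * (a\<^sup>2 + b\<^sup>2))"
    unfolding dist_point p_def by (simp add: power2_eq_square algebra_simps)
  then have dist_p: "dist z p = \<bar>f\<bar>" by (simp add: unit)
  have lower: "\<bar>f\<bar> \<le> dist z q" if q: "q \<in> line_eqn a b c" for q
  proof -
    have "f = inner (a, b) (z - q)" using q by (cases z; cases q) (simp add: f_def algebra_simps)
    also have "\<bar>\<dots>\<bar> \<le> norm (a, b) * norm (z - q)" by (rule Cauchy_Schwarz_ineq2)
    finally show ?thesis by (simp add: norm_Pair unit dist_norm)
  qed
  have ne: "line_eqn a b c \<noteq> {}" using p by blast
  have "\<bar>f\<bar> \<le> infdist z (line_eqn a b c)"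
    unfolding infdist_notempty[OF ne] by (rule cINF_greatest[OF ne lower])
  moreover have "infdist z (line_eqn a b c) \<le> \<bar>f\<bar>"
    using infdist_le[OF p, of z] unfolding dist_p .
  ultimately show ?thesis unfolding f_def by simp
qed

lemma equidistant_line_eqn_bisector:
  assumes unit: "a1\<^sup>2 + b1\<^sup>2 = 1" "a2\<^sup>2 + b2\<^sup>2 = 1" and e: "e \<in> {1, -1}"
    and nondeg: "(a1 - e * a2, b1 - e * b2) \<noteq> (0, 0)"
  shows "equidistant_line (line_eqn a1 b1 c1) (line_eqn a2 b2 c2)
    (line_eqn (a1 - e * a2) (b1 - e * b2) (c1 - e * c2))"
  unfolding equidistant_line_def
proof (intro conjI ballI)
  show "is_line (line_eqn (a1 - e * a2) (b1 - e * b2) (c1 - e * c2))"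
    using nondeg by (rule is_line_line_eqn)
next
  fix z assume "z \<in> line_eqn (a1 - e * a2) (b1 - e * b2) (c1 - e * c2)"
  then have "a1 * fst z + b1 * snd z - c1 = e * (a2 * fst z + b2 * snd z - c2)"
    by (simp add: algebra_simps)
  then show "infdist z (line_eqn a1 b1 c1) = infdist z (line_eqn a2 b2 c2)"
    using e by (auto simp: infdist_line_eqn unit abs_minus_commute)
qed

lemma equidistant_line_eqn_cases:
  assumes unit: "a1\<^sup>2 + b1\<^sup>2 = 1" "a2\<^sup>2 + b2\<^sup>2 = 1"
    and ne: "line_eqn a1 b1 c1 \<noteq> line_eqn a2 b2 c2"
    and eq: "equidistant_line (line_eqn a1 b1 c1) (line_eqn a2 b2 c2) L"
  obtains e where "e \<in> {1, -1}" "(a1 - e * a2, b1 - e * b2) \<noteq> (0, 0)"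
    "L = line_eqn (a1 - e * a2) (b1 - e * b2) (c1 - e * c2)"
proof -
  obtain a b c where ab: "(a, b) \<noteq> (0, 0)" and L: "L = line_eqn a b c"
    using eq unfolding equidistant_line_def by (meson is_lineE)
  have "z \<in> line_eqn (a1 - 1 * a2) (b1 - 1 * b2) (c1 - 1 * c2) \<union>
      line_eqn (a1 - (-1) * a2) (b1 - (-1) * b2) (c1 - (-1) * c2)" if "z \<in> L" for z
  proof -
    have "\<bar>a1 * fst z + b1 * snd z - c1\<bar> = \<bar>a2 * fst z + b2 * snd z - c2\<bar>"
      using eq that unfolding equidistant_line_def by (simp add: infdist_line_eqn unit)
    then have "a1 * fst z + b1 * snd z - c1 = a2 * fst z + b2 * snd z - c2 \<or>
        a1 * fst z + b1 * snd z - c1 = - (a2 * fst z + b2 * snd z - c2)"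
      by (simp only: abs_eq_iff)
    then show ?thesis by (simp add: algebra_simps)
  qed
  then have "L \<subseteq> line_eqn (a1 - 1 * a2) (b1 - 1 * b2) (c1 - 1 * c2) \<union>
      line_eqn (a1 - (-1) * a2) (b1 - (-1) * b2) (c1 - (-1) * c2)"
    by blast
  then have "L \<subseteq> line_eqn (a1 - 1 * a2) (b1 - 1 * b2) (c1 - 1 * c2) \<or>
      L \<subseteq> line_eqn (a1 - (-1) * a2) (b1 - (-1) * b2) (c1 - (-1) * c2)"
    unfolding L by (rule line_eqn_subset_Un[OF ab])
  then obtain e where e: "e \<in> {1, -1}"
    and sub: "L \<subseteq> line_eqn (a1 - e * a2) (b1 - e * b2) (c1 - e * c2)"
    by (metis insertI1 insertI2 singletonI)
  have nondeg: "(a1 - e * a2, b1 - e * b2) \<noteq> (0, 0)"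
  proof
    assume "(a1 - e * a2, b1 - e * b2) = (0, 0)"
    then have a1: "a1 = e * a2" and b1: "b1 = e * b2" by auto
    obtain z where "z \<in> L" using line_eqn_nonempty[OF ab] L by blast
    then have "c1 = e * c2" using sub a1 b1 by auto
    then have "line_eqn a1 b1 c1 = line_eqn a2 b2 c2"
      using a1 b1 e line_eqn_scale[of e a2 b2 c2] by auto
    then show False using ne by contradiction
  qed
  show ?thesis
    using that[OF e nondeg] line_eqn_subset_imp_eq[OF ab nondeg] sub unfolding L by blast
qed

section \<open>Real Pythagorean fields\<close>

text \<open>Since \<open>inverse 0 = 0\<close>, \<open>inverse_mem\<close> needs no side condition.\<close>

locale real_pythagorean_field =
  fixes K :: "real set"
  assumes zero_mem: "0 \<in> K"
    and one_mem: "1 \<in> K"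
    and add_mem: "x \<in> K \<Longrightarrow> y \<in> K \<Longrightarrow> x + y \<in> K"
    and uminus_mem: "x \<in> K \<Longrightarrow> - x \<in> K"
    and mult_mem: "x \<in> K \<Longrightarrow> y \<in> K \<Longrightarrow> x * y \<in> K"
    and inverse_mem: "x \<in> K \<Longrightarrow> inverse x \<in> K"
    and sqrt_1_plus_sq_mem: "x \<in> K \<Longrightarrow> sqrt (1 + x\<^sup>2) \<in> K"
begin

lemma diff_mem: "x \<in> K \<Longrightarrow> y \<in> K \<Longrightarrow> x - y \<in> K"
  using add_mem[OF _ uminus_mem] by simp

lemma divide_mem: "x \<in> K \<Longrightarrow> y \<in> K \<Longrightarrow> x / y \<in> K"
  using mult_mem[OF _ inverse_mem] by (simp add: divide_inverse)

lemma power2_mem: "x \<in> K \<Longrightarrow> x\<^sup>2 \<in> K"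
  using mult_mem by (simp add: power2_eq_square)

lemma two_mem: "2 \<in> K"
  using add_mem[OF one_mem one_mem] by simp

lemma abs_mem_iff: "\<bar>x\<bar> \<in> K \<longleftrightarrow> x \<in> K"
  using uminus_mem[of x] uminus_mem[of "- x"] by (cases "x \<ge> 0") auto

lemma sqrt_sum_squares_mem:
  assumes "x \<in> K" "y \<in> K"
  shows "sqrt (x\<^sup>2 + y\<^sup>2) \<in> K"
proof (cases "x = 0")
  case True
  then show ?thesis using assms(2) abs_mem_iff by simp
next
  case False
  then have "x\<^sup>2 + y\<^sup>2 = x\<^sup>2 * (1 + (y / x)\<^sup>2)" by (simp add: field_simps)
  then have "sqrt (x\<^sup>2 + y\<^sup>2) = \<bar>x\<bar> * sqrt (1 + (y / x)\<^sup>2)" by (simp add: real_sqrt_mult)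
  then show ?thesis
    using assms by (simp add: mult_mem abs_mem_iff sqrt_1_plus_sq_mem divide_mem)
qed

lemma dist_mem: "p \<in> K \<times> K \<Longrightarrow> q \<in> K \<times> K \<Longrightarrow> dist p q \<in> K"
  unfolding dist_point by (auto intro!: sqrt_sum_squares_mem diff_mem)

lemma origami_numbers_subset_if_points:
  assumes "origami_points \<subseteq> K \<times> K"
  shows "origami_numbers \<subseteq> K"
proof
  fix \<alpha> assume "\<alpha> \<in> origami_numbers"
  then obtain v1 v2 where "v1 \<in> origami_points" "v2 \<in> origami_points" "\<bar>\<alpha>\<bar> = dist v1 v2"
    unfolding origami_numbers_def by blast
  then have "\<bar>\<alpha>\<bar> \<in> K" using assms by (simp add: dist_mem subsetD)
  then show "\<alpha> \<in> K" by (simp add: abs_mem_iff)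
qed

end

lemma real_pythagorean_field_Inter:
  assumes "\<And>K. K \<in> \<K> \<Longrightarrow> real_pythagorean_field K"
  shows "real_pythagorean_field (\<Inter>\<K>)"
  using assms unfolding real_pythagorean_field_def by simp

section \<open>The origami pair of a real Pythagorean field\<close>

definition lines_over :: "real set \<Rightarrow> point set set" where
  "lines_over K = {line_eqn a b c | a b c. a \<in> K \<and> b \<in> K \<and> c \<in> K \<and> (a, b) \<noteq> (0, 0)}"

context real_pythagorean_field
begin

lemma line_eqn_mem_lines_over:
  "a \<in> K \<Longrightarrow> b \<in> K \<Longrightarrow> c \<in> K \<Longrightarrow> (a, b) \<noteq> (0, 0) \<Longrightarrow> line_eqn a b c \<in> lines_over K"
  unfolding lines_over_def by blast

lemma lines_overE:
  assumes "L \<in> lines_over K"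
  obtains a b c where "a \<in> K" "b \<in> K" "c \<in> K" "(a, b) \<noteq> (0, 0)" "L = line_eqn a b c"
  using assms unfolding lines_over_def by blast

lemma lines_over_unit_normalE:
  assumes "L \<in> lines_over K"
  obtains a b c where "a \<in> K" "b \<in> K" "c \<in> K" "a\<^sup>2 + b\<^sup>2 = 1" "L = line_eqn a b c"
proof -
  obtain a b c where abc: "a \<in> K" "b \<in> K" "c \<in> K" and ab: "(a, b) \<noteq> (0, 0)"
    and L: "L = line_eqn a b c"
    using assms by (rule lines_overE)
  define n where "n = sqrt (a\<^sup>2 + b\<^sup>2)"
  have "n > 0" using sum_squares_pos[OF ab] by (simp add: n_def)
  have "n \<in> K" unfolding n_def using abc(1,2) by (rule sqrt_sum_squares_mem)
  have "(a / n)\<^sup>2 + (b / n)\<^sup>2 = (a\<^sup>2 + b\<^sup>2) / n\<^sup>2" by (simp add: power_divide add_divide_distrib)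
  also have "\<dots> = 1" using ab by (simp add: n_def)
  finally have unit: "(a / n)\<^sup>2 + (b / n)\<^sup>2 = 1" .
  have "L = line_eqn (n * (a / n)) (n * (b / n)) (n * (c / n))"
    using \<open>n > 0\<close> L by simp
  also have "\<dots> = line_eqn (a / n) (b / n) (c / n)"
    by (rule line_eqn_scale) (use \<open>n > 0\<close> in simp)
  finally show ?thesis
    using that[OF divide_mem divide_mem divide_mem unit] abc \<open>n \<in> K\<close> by blast
qed

lemma intersection_mem_lines_over:
  assumes "L1 \<in> lines_over K" "L2 \<in> lines_over K" "L1 \<inter> L2 = {p}"
  shows "p \<in> K \<times> K"
proof -
  obtain a1 b1 c1 where 1: "a1 \<in> K" "b1 \<in> K" "c1 \<in> K" "(a1, b1) \<noteq> (0, 0)" "L1 = line_eqn a1 b1 c1"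
    using assms(1) by (rule lines_overE)
  obtain a2 b2 c2 where 2: "a2 \<in> K" "b2 \<in> K" "c2 \<in> K" "L2 = line_eqn a2 b2 c2"
    using assms(2) by (rule lines_overE)
  have "p = ((c1 * b2 - c2 * b1) / (a1 * b2 - a2 * b1), (a1 * c2 - a2 * c1) / (a1 * b2 - a2 * b1))"
    using line_eqn_Int_eq_singleton(2)[OF 1(4)] assms(3) unfolding 1(5) 2(4) .
  then show ?thesis using 1 2 by (simp add: divide_mem diff_mem mult_mem)
qed

lemma line_through_mem_lines_over:
  "p \<in> K \<times> K \<Longrightarrow> q \<in> K \<times> K \<Longrightarrow> p \<noteq> q \<Longrightarrow> line_through p q \<in> lines_over K"
  unfolding line_through_eq
  by (rule line_eqn_mem_lines_over) (auto simp: prod_eq_iff intro!: diff_mem mult_mem)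

lemma perp_bisector_mem_lines_over:
  "p \<in> K \<times> K \<Longrightarrow> q \<in> K \<times> K \<Longrightarrow> p \<noteq> q \<Longrightarrow> perp_bisector p q \<in> lines_over K"
  unfolding perp_bisector_eq
  by (rule line_eqn_mem_lines_over)
    (auto simp: prod_eq_iff intro!: diff_mem mult_mem add_mem power2_mem two_mem)

lemma reflect_line_mem_lines_over:
  assumes "L1 \<in> lines_over K" "L2 \<in> lines_over K"
  shows "reflect_line L1 L2 \<in> lines_over K"
proof -
  obtain a1 b1 c1 where 1: "a1 \<in> K" "b1 \<in> K" "c1 \<in> K" "(a1, b1) \<noteq> (0, 0)" "L1 = line_eqn a1 b1 c1"
    using assms(1) by (rule lines_overE)
  obtain a2 b2 c2 where 2: "a2 \<in> K" "b2 \<in> K" "c2 \<in> K" "(a2, b2) \<noteq> (0, 0)" "L2 = line_eqn a2 b2 c2"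
    using assms(2) by (rule lines_overE)
  have k: "(a1 * a2 + b1 * b2) / (a1\<^sup>2 + b1\<^sup>2) \<in> K"
    using 1 2 by (auto intro!: divide_mem add_mem mult_mem power2_mem)
  show ?thesis
    unfolding 1(5) 2(5) reflect_line_line_eqn_eq[OF 1(4)]
    by (rule line_eqn_mem_lines_over[OF _ _ _ reflect_line_line_eqn_nondegenerate[OF 1(4) 2(4)]])
      (intro diff_mem mult_mem two_mem k 1(1-3) 2(1-3))+
qed

lemma equidistant_line_mem_lines_over:
  assumes "L1 \<in> lines_over K" "L2 \<in> lines_over K" "L1 \<noteq> L2" "equidistant_line L1 L2 L"
  shows "L \<in> lines_over K"
proof -
  obtain a1 b1 c1 where 1: "a1 \<in> K" "b1 \<in> K" "c1 \<in> K" "a1\<^sup>2 + b1\<^sup>2 = 1" "L1 = line_eqn a1 b1 c1"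
    using assms(1) by (rule lines_over_unit_normalE)
  obtain a2 b2 c2 where 2: "a2 \<in> K" "b2 \<in> K" "c2 \<in> K" "a2\<^sup>2 + b2\<^sup>2 = 1" "L2 = line_eqn a2 b2 c2"
    using assms(2) by (rule lines_over_unit_normalE)
  obtain e where e: "e \<in> {1, -1}" and nondeg: "(a1 - e * a2, b1 - e * b2) \<noteq> (0, 0)"
    and L: "L = line_eqn (a1 - e * a2) (b1 - e * b2) (c1 - e * c2)"
    using equidistant_line_eqn_cases[OF 1(4) 2(4)] assms(3,4) unfolding 1(5) 2(5) by blast
  have "e \<in> K" using e one_mem uminus_mem by auto
  then show ?thesis
    unfolding L using nondeg 1 2 by (intro line_eqn_mem_lines_over) (auto intro!: diff_mem mult_mem)
qed

theorem origami_pair_lines_over: "origami_pair (K \<times> K) (lines_over K)"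
  unfolding origami_pair_def
proof (intro conjI ballI allI impI)
  show "is_line L" if "L \<in> lines_over K" for L
    using that by (metis lines_overE is_line_line_eqn)
  show "p \<in> K \<times> K" if "L1 \<in> lines_over K" "L2 \<in> lines_over K" "L1 \<inter> L2 = {p}" for L1 L2 p
    using that by (rule intersection_mem_lines_over)
qed (auto intro: line_through_mem_lines_over
    perp_bisector_mem_lines_over reflect_line_mem_lines_over equidistant_line_mem_lines_over)

lemma origami_numbers_subset: "origami_numbers \<subseteq> K"
proof (rule origami_numbers_subset_if_points)
  have "K \<times> K \<in> {P. (0, 0) \<in> P \<and> (0, 1) \<in> P \<and> origami_closed P}"
    using origami_pair_lines_over zero_mem one_mem by (auto simp: origami_closed_def)
  then show "origami_points \<subseteq> K \<times> K"
    unfolding origami_points_def by (rule Inter_lower)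
qed

end

section \<open>Constructions inside an origami pair\<close>

definition abscissas :: "point set \<Rightarrow> real set" where
  "abscissas P = {x. (x, 0) \<in> P}"

locale origami_frame =
  fixes P :: "point set" and \<L> :: "point set set"
  assumes origami_pair: "origami_pair P \<L>"
    and origin_mem: "(0, 0) \<in> P"
    and unit_mem: "(0, 1) \<in> P"
begin

lemma intersection_mem: "L1 \<in> \<L> \<Longrightarrow> L2 \<in> \<L> \<Longrightarrow> L1 \<inter> L2 = {p} \<Longrightarrow> p \<in> P"
  using origami_pair unfolding origami_pair_def by (elim conjE) metis

lemma line_through_mem: "p \<in> P \<Longrightarrow> q \<in> P \<Longrightarrow> p \<noteq> q \<Longrightarrow> line_through p q \<in> \<L>"
  using origami_pair unfolding origami_pair_def by (elim conjE) metis

lemma perp_bisector_mem: "p \<in> P \<Longrightarrow> q \<in> P \<Longrightarrow> p \<noteq> q \<Longrightarrow> perp_bisector p q \<in> \<L>"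
  using origami_pair unfolding origami_pair_def by (elim conjE) metis

lemma equidistant_line_mem:
  "L1 \<in> \<L> \<Longrightarrow> L2 \<in> \<L> \<Longrightarrow> L1 \<noteq> L2 \<Longrightarrow> equidistant_line L1 L2 L \<Longrightarrow> L \<in> \<L>"
  using origami_pair unfolding origami_pair_def by (elim conjE) metis

lemma reflect_line_mem: "L1 \<in> \<L> \<Longrightarrow> L2 \<in> \<L> \<Longrightarrow> reflect_line L1 L2 \<in> \<L>"
  using origami_pair unfolding origami_pair_def by (elim conjE) metis

lemma bisector_mem:
  assumes "line_eqn a1 b1 c1 \<in> \<L>" "line_eqn a2 b2 c2 \<in> \<L>" "line_eqn a1 b1 c1 \<noteq> line_eqn a2 b2 c2"
    and "a1\<^sup>2 + b1\<^sup>2 = 1" "a2\<^sup>2 + b2\<^sup>2 = 1" "e \<in> {1, -1}" "(a1 - e * a2, b1 - e * b2) \<noteq> (0, 0)"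
  shows "line_eqn (a1 - e * a2) (b1 - e * b2) (c1 - e * c2) \<in> \<L>"
  using equidistant_line_mem[OF assms(1-3) equidistant_line_eqn_bisector[OF assms(4-7)]] .

lemma reflect_intersection_mem:
  assumes "L1 \<in> \<L>" "L2 \<in> \<L>" "L1 \<inter> L2 = {p}"
    and "line_eqn a b c \<in> \<L>" "(a, b) \<noteq> (0, 0)"
  shows "reflect_point a b c p \<in> P"
proof -
  have "inj (reflect_point a b c)"
    by (metis injI reflect_point_involution[OF assms(5)])
  then have "reflect_line (line_eqn a b c) L1 \<inter> reflect_line (line_eqn a b c) L2 =
      {reflect_point a b c p}"
    unfolding reflect_line_line_eqn[OF assms(5)] using assms(3) by (simp flip: image_Int)
  then show ?thesis using assms by (blast intro: intersection_mem reflect_line_mem)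
qed

lemma y_axis_mem: "line_eqn 1 0 0 \<in> \<L>"
proof -
  have "line_through (0, 0) (0, 1) = line_eqn 1 0 0" by (simp add: line_through_eq)
  then show ?thesis using line_through_mem[OF origin_mem unit_mem] by simp
qed

text \<open>\<open>(1, 0)\<close> is the mirror image of \<open>(0, 1)\<close> in the diagonal \<open>y = x\<close>, which we reach
  through the point \<open>(1/4, 1/4)\<close> where the angle bisector \<open>x + y = 1/2\<close> of the \<open>y\<close>-axis and the
  line \<open>y = 1/2\<close> meets the line \<open>y = 1/4\<close>.\<close>

lemma point_1_0_mem: "(1, 0) \<in> P"
proof -
  have "perp_bisector (0, 0) (0, 1) = line_eqn (2 * 0) (2 * 1) (2 * (1 / 2))"
    by (simp add: perp_bisector_eq)
  then have half: "line_eqn 0 1 (1 / 2) \<in> \<L>"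
    using perp_bisector_mem[OF origin_mem unit_mem] line_eqn_scale[of 2 0 1 "1 / 2"] by simp
  have "line_eqn 1 0 0 \<inter> line_eqn 0 1 (1 / 2) = {(0, 1 / 2)}" by (auto simp: prod_eq_iff)
  then have mid: "(0, 1 / 2) \<in> P" using intersection_mem[OF y_axis_mem half] by simp
  have "(0, 0) \<in> line_eqn 1 0 0" "(0, 0) \<notin> line_eqn 0 1 (1 / 2)" by simp_all
  then have "line_eqn 1 0 0 \<noteq> line_eqn 0 1 (1 / 2)" by blast
  then have bisector: "line_eqn 1 1 (1 / 2) \<in> \<L>"
    using bisector_mem[OF y_axis_mem half, of "-1"] by simp
  have "perp_bisector (0, 0) (0, 1 / 2) = line_eqn 0 1 (1 / 4)"
    by (simp add: perp_bisector_eq power2_eq_square)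
  then have quarter: "line_eqn 0 1 (1 / 4) \<in> \<L>"
    using perp_bisector_mem[OF origin_mem mid] by simp
  have "line_eqn 0 1 (1 / 4) \<inter> line_eqn 1 1 (1 / 2) = {(1 / 4, 1 / 4)}" by (auto simp: prod_eq_iff)
  then have q: "(1 / 4, 1 / 4) \<in> P" using intersection_mem[OF quarter bisector] by simp
  have diagonal: "line_eqn (1 / 4) (- 1 / 4) 0 \<in> \<L>"
    using line_through_mem[OF origin_mem q] by (simp add: line_through_eq)
  have through_q: "line_eqn (- 3 / 4) (- 1 / 4) (- 1 / 4) \<in> \<L>"
    using line_through_mem[OF unit_mem q] by (simp add: line_through_eq)
  have "line_eqn 1 0 0 \<inter> line_eqn (- 3 / 4) (- 1 / 4) (- 1 / 4) = {(0, 1)}"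
    by (auto simp: prod_eq_iff)
  then have "reflect_point (1 / 4) (- 1 / 4) 0 (0, 1) \<in> P"
    by (rule reflect_intersection_mem[OF y_axis_mem through_q _ diagonal]) simp
  moreover have "reflect_point (1 / 4) (- 1 / 4) 0 (0, 1) = (1, 0)"
    by (simp add: reflect_point_def power2_eq_square)
  ultimately show ?thesis by metis
qed

lemma lines_through_pointE:
  assumes "p \<in> P"
  obtains L1 L2 where "L1 \<in> \<L>" "L2 \<in> \<L>" "L1 \<inter> L2 = {p}"
proof -
  have "\<exists>q r. q \<in> P \<and> r \<in> P \<and> p \<noteq> q \<and> p \<noteq> r \<and>
     (fst q - fst p) * (snd r - snd p) - (snd q - snd p) * (fst r - fst p) \<noteq> 0"
  proof (cases "fst p = 0")
    case False
    then show ?thesis using origin_mem unit_mem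
      by (intro exI[of _ "(0, 0)"] exI[of _ "(0, 1)"]) (auto simp: algebra_simps)
  next
    case x0: True
    show ?thesis
    proof (cases "snd p = 0")
      case False
      then show ?thesis using origin_mem point_1_0_mem x0
        by (intro exI[of _ "(0, 0)"] exI[of _ "(1, 0)"]) (auto simp: algebra_simps)
    next
      case True
      then show ?thesis using unit_mem point_1_0_mem x0
        by (intro exI[of _ "(0, 1)"] exI[of _ "(1, 0)"]) (auto simp: algebra_simps)
    qed
  qed
  then obtain q r where "q \<in> P" "r \<in> P" "p \<noteq> q" "p \<noteq> r"
     "(fst q - fst p) * (snd r - snd p) - (snd q - snd p) * (fst r - fst p) \<noteq> 0"
    by blast
  then show ?thesis
    using that line_through_mem[OF assms] line_through_Int_singleton by blast
qed

lemma reflect_point_mem: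
  assumes "p \<in> P" "line_eqn a b c \<in> \<L>" "(a, b) \<noteq> (0, 0)"
  shows "reflect_point a b c p \<in> P"
  using lines_through_pointE[OF assms(1)] reflect_intersection_mem assms(2,3) by metis

lemma x_axis_mem: "line_eqn 0 1 0 \<in> \<L>"
proof -
  have "line_through (0, 0) (1, 0) = line_eqn 0 1 0" by (auto simp: line_through_def)
  then show ?thesis using line_through_mem[OF origin_mem point_1_0_mem] by simp
qed

lemma diagonal_mem: "line_eqn (- 1) 1 0 \<in> \<L>"
proof -
  have "perp_bisector (1, 0) (0, 1) = line_eqn (- 1) 1 0" by (auto simp: perp_bisector_eq)
  then show ?thesis using perp_bisector_mem[OF point_1_0_mem unit_mem] by simp
qed

lemma swap_mem:
  assumes "(u, v) \<in> P"
  shows "(v, u) \<in> P"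
proof -
  have "reflect_point (- 1) 1 0 (u, v) = (v, u)" by (simp add: reflect_point_def field_simps)
  then show ?thesis using reflect_point_mem[OF assms diagonal_mem] by simp
qed

lemma project_mem:
  assumes "(u, v) \<in> P"
  shows "(u, 0) \<in> P"
proof (cases "v = 0")
  case True
  then show ?thesis using assms by simp
next
  case False
  have "(u, - v) \<in> P"
    using reflect_point_mem[OF assms x_axis_mem] by (simp add: reflect_point_def)
  then have "line_through (u, v) (u, - v) \<in> \<L>"
    using line_through_mem[OF assms] False by simp
  moreover have "line_through (u, v) (u, - v) \<inter> line_eqn 0 1 0 = {(u, 0)}"
    using False by (auto simp: line_through_def)
  ultimately show ?thesis using intersection_mem x_axis_mem by blast
qed

lemma points_subset_abscissas: "P \<subseteq> abscissas P \<times> abscissas P"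
  using project_mem swap_mem by (force simp: abscissas_def)

lemma abscissas_zero: "0 \<in> abscissas P"
  using origin_mem by (simp add: abscissas_def)

lemma abscissas_one: "1 \<in> abscissas P"
  using point_1_0_mem by (simp add: abscissas_def)

lemma abscissas_uminus:
  assumes "x \<in> abscissas P"
  shows "- x \<in> abscissas P"
proof -
  have "reflect_point 1 0 0 (x, 0) \<in> P"
    using reflect_point_mem[OF _ y_axis_mem] assms by (simp add: abscissas_def)
  then show ?thesis by (simp add: reflect_point_vertical_line abscissas_def)
qed

lemma vertical_line_mem:
  assumes "a \<in> abscissas P"
  shows "line_eqn 1 0 a \<in> \<L>"
proof (cases "a = 0")
  case True
  then show ?thesis using y_axis_mem by simp
next
  case False
  then have "perp_bisector (0, 0) (a, 0) = line_eqn 1 0 (a / 2)"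
    using perp_bisector_on_x_axis[of 0 a] by simp
  moreover have "perp_bisector (0, 0) (a, 0) \<in> \<L>"
    by (rule perp_bisector_mem[OF origin_mem]) (use assms False in \<open>simp_all add: abscissas_def\<close>)
  ultimately have "line_eqn 1 0 (a / 2) \<in> \<L>" by simp
  from reflect_line_mem[OF this y_axis_mem] show ?thesis
    by (simp add: reflect_line_vertical_lines)
qed

lemma horizontal_line_mem:
  assumes "b \<in> abscissas P"
  shows "line_eqn 0 1 b \<in> \<L>"
  using reflect_line_mem[OF diagonal_mem vertical_line_mem[OF assms]]
  by (simp add: reflect_line_line_eqn_eq)

lemma pair_mem:
  assumes "a \<in> abscissas P" "b \<in> abscissas P"
  shows "(a, b) \<in> P"
proof -
  have "line_eqn 1 0 a \<inter> line_eqn 0 1 b = {(a, b)}" by (auto simp: prod_eq_iff)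
  then show ?thesis
    using intersection_mem[OF vertical_line_mem horizontal_line_mem] assms by blast
qed

lemma abscissas_add:
  assumes "x \<in> abscissas P" "y \<in> abscissas P"
  shows "x + y \<in> abscissas P"
proof -
  have mid: "line_eqn 1 0 ((x + y) / 2) \<in> \<L>"
  proof (cases "x = y")
    case True
    then show ?thesis using vertical_line_mem[OF assms(1)] by simp
  next
    case False
    have "perp_bisector (x, 0) (y, 0) \<in> \<L>"
      by (rule perp_bisector_mem) (use assms False in \<open>simp_all add: abscissas_def\<close>)
    then show ?thesis using perp_bisector_on_x_axis[OF False] by simp
  qed
  have "reflect_point 1 0 ((x + y) / 2) (0, 0) \<in> P"
    by (rule reflect_point_mem[OF origin_mem mid]) simp
  moreover have "reflect_point 1 0 ((x + y) / 2) (0, 0) = (x + y, 0)"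
    by (simp add: reflect_point_vertical_line field_simps)
  ultimately show ?thesis by (simp add: abscissas_def)
qed

lemma slope_point_mem:
  assumes "a \<in> abscissas P" "b \<in> abscissas P" "c \<in> abscissas P" "a \<noteq> 0"
  shows "(c, c * b / a) \<in> P"
proof -
  have "line_through (0, 0) (a, b) \<in> \<L>"
    using line_through_mem[OF origin_mem pair_mem[OF assms(1,2)]] assms(4) by simp
  moreover have "line_eqn 1 0 c \<inter> line_through (0, 0) (a, b) = {(c, c * b / a)}"
    using assms(4) by (auto simp: line_through_def field_simps)
  ultimately show ?thesis using intersection_mem vertical_line_mem[OF assms(3)] by blast
qed

lemma abscissas_mult:
  assumes "x \<in> abscissas P" "y \<in> abscissas P"
  shows "x * y \<in> abscissas P"
proof -
  have "(x, x * y / 1) \<in> P" by (rule slope_point_mem[OF abscissas_one assms(2,1)]) simp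
  then show ?thesis using points_subset_abscissas by auto
qed

lemma abscissas_inverse:
  assumes "x \<in> abscissas P"
  shows "inverse x \<in> abscissas P"
proof (cases "x = 0")
  case True
  then show ?thesis using abscissas_zero by simp
next
  case False
  have "(1, 1 * 1 / x) \<in> P" by (rule slope_point_mem[OF assms abscissas_one abscissas_one False])
  then show ?thesis using points_subset_abscissas by (auto simp: inverse_eq_divide)
qed

text \<open>With \<open>s = sqrt (1 + t\<^sup>2)\<close>, the line \<open>- t x + (s + 1) y = 0\<close> bisects the angle between the
  \<open>x\<close>-axis and the line through \<open>0\<close> and \<open>(1, t)\<close>, and it reflects \<open>(1, t)\<close> to \<open>(s, 0)\<close>.\<close>

lemma bisector_x_axis_slope_mem:
  assumes t: "t \<in> abscissas P" "t \<noteq> 0" and s: "s = sqrt (1 + t\<^sup>2)"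
  shows "line_eqn (- t) (s + 1) 0 \<in> \<L>"
proof -
  have "s > 0" using s by (simp add: add_pos_nonneg)
  have "line_through (0, 0) (1, t) = line_eqn (s * (t / s)) (s * (- 1 / s)) (s * 0)"
    using \<open>s > 0\<close> by (simp add: line_through_eq)
  also have "\<dots> = line_eqn (t / s) (- 1 / s) 0"
    by (rule line_eqn_scale) (use \<open>s > 0\<close> in simp)
  finally have slope: "line_eqn (t / s) (- 1 / s) 0 \<in> \<L>"
    using line_through_mem[OF origin_mem pair_mem[OF abscissas_one t(1)]] by simp
  have "(1, 0) \<in> line_eqn 0 1 0" "(1, 0) \<notin> line_eqn (t / s) (- 1 / s) 0"
    using t(2) \<open>s > 0\<close> by simp_all
  then have ne: "line_eqn 0 1 0 \<noteq> line_eqn (t / s) (- 1 / s) 0" by blast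
  have unit: "(t / s)\<^sup>2 + (- 1 / s)\<^sup>2 = 1"
    using \<open>s > 0\<close> by (simp add: s power_divide add_divide_distrib[symmetric] add.commute)
  have "1 - 1 * (- 1 / s) > 0" using \<open>s > 0\<close> by (simp add: add_pos_pos)
  then have nondeg: "(0 - 1 * (t / s), 1 - 1 * (- 1 / s)) \<noteq> (0, 0)" by simp
  have bisector: "line_eqn (0 - 1 * (t / s)) (1 - 1 * (- 1 / s)) (0 - 1 * 0) \<in> \<L>"
    by (rule bisector_mem[OF x_axis_mem slope ne _ unit _ nondeg]) simp_all
  have "s * (0 - 1 * (t / s)) = - t" "s * (1 - 1 * (- 1 / s)) = s + 1"
    using \<open>s > 0\<close> by (simp_all add: field_simps)
  then have "line_eqn (- t) (s + 1) 0 =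
      line_eqn (s * (0 - 1 * (t / s))) (s * (1 - 1 * (- 1 / s))) (s * (0 - 1 * 0))"
    by simp
  also have "\<dots> = line_eqn (0 - 1 * (t / s)) (1 - 1 * (- 1 / s)) (0 - 1 * 0)"
    by (rule line_eqn_scale) (use \<open>s > 0\<close> in simp)
  finally show ?thesis using bisector by simp
qed

lemma abscissas_sqrt_1_plus_sq:
  assumes t: "t \<in> abscissas P"
  shows "sqrt (1 + t\<^sup>2) \<in> abscissas P"
proof (cases "t = 0")
  case True
  then show ?thesis using abscissas_one by simp
next
  case False
  define s where "s = sqrt (1 + t\<^sup>2)"
  have "s \<ge> 0" by (simp add: s_def)
  then have "s + 1 \<noteq> 0" by linarith
  have "reflect_point (- t) (s + 1) 0 (1, t) \<in> P"
    using reflect_point_mem[OF pair_mem[OF abscissas_one t] bisector_x_axis_slope_mem[OF t False s_def]]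
      \<open>s + 1 \<noteq> 0\<close> by simp
  then show ?thesis
    unfolding reflect_point_onto_x_axis[OF s_def] by (simp add: abscissas_def s_def)
qed

theorem real_pythagorean_field_abscissas: "real_pythagorean_field (abscissas P)"
  by unfold_locales
    (simp_all add: abscissas_zero abscissas_one abscissas_add abscissas_uminus abscissas_mult
      abscissas_inverse abscissas_sqrt_1_plus_sq)

end

lemma origami_numbers_eq_Inter_abscissas:
  "origami_numbers = \<Inter> (abscissas ` {P. (0, 0) \<in> P \<and> (0, 1) \<in> P \<and> origami_closed P})"
proof (intro equalityI subsetI)
  fix \<alpha> assume \<alpha>: "\<alpha> \<in> origami_numbers"
  show "\<alpha> \<in> \<Inter> (abscissas ` {P. (0, 0) \<in> P \<and> (0, 1) \<in> P \<and> origami_closed P})"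
  proof (intro InterI, elim imageE)
    fix K P assume K: "K = abscissas P" and P: "P \<in> {P. (0, 0) \<in> P \<and> (0, 1) \<in> P \<and> origami_closed P}"
    then obtain \<L> where "origami_frame P \<L>"
      by (auto simp: origami_closed_def origami_frame_def)
    then interpret origami_frame P \<L> .
    have "origami_points \<subseteq> P"
      unfolding origami_points_def using P by (rule Inter_lower)
    then have "origami_numbers \<subseteq> abscissas P"
      using points_subset_abscissas
      by (intro real_pythagorean_field.origami_numbers_subset_if_points[OF real_pythagorean_field_abscissas])
        blast
    then show "\<alpha> \<in> K" using \<alpha> K by blast
  qed
next
  fix \<alpha> assume "\<alpha> \<in> \<Inter> (abscissas ` {P. (0, 0) \<in> P \<and> (0, 1) \<in> P \<and> origami_closed P})"
  then have "(\<alpha>, 0) \<in> origami_points"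
    unfolding origami_points_def abscissas_def by blast
  moreover have "(0, 0) \<in> origami_points" unfolding origami_points_def by blast
  moreover have "\<bar>\<alpha>\<bar> = dist (\<alpha>, 0) (0, 0)" by (simp add: dist_Pair_Pair dist_real_def)
  ultimately show "\<alpha> \<in> origami_numbers" unfolding origami_numbers_def by blast
qed

lemma real_pythagorean_field_origami_numbers: "real_pythagorean_field origami_numbers"
  unfolding origami_numbers_eq_Inter_abscissas
  by (rule real_pythagorean_field_Inter)
    (auto simp: origami_closed_def intro: origami_frame.real_pythagorean_field_abscissas origami_frame.intro)

section \<open>Subfields of the complex numbers closed under square roots of \<open>1 + x\<^sup>2\<close>\<close>

lemma is_subfield_square_root_mem:
  assumes F: "is_subfield F" and y: "y \<in> F" "y\<^sup>2 = z\<^sup>2"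
  shows "z \<in> F"
proof -
  have "z = y \<or> z = 0 - y" using y(2) by (auto simp: power2_eq_iff)
  then show ?thesis using F y(1) unfolding is_subfield_def by blast
qed

lemma is_subfield_F_sqrt_1_plus_sq: "is_subfield F_sqrt_1_plus_sq"
  unfolding F_sqrt_1_plus_sq_def is_subfield_def by auto

text \<open>The subfields in the defining family may contain different square roots of \<open>1 + x\<^sup>2\<close>,
  but being closed under negation each contains both, so the intersection contains
  \<open>csqrt (1 + x\<^sup>2)\<close>.\<close>

lemma F_sqrt_1_plus_sq_has_sqrt:
  assumes "x \<in> F_sqrt_1_plus_sq"
  shows "\<exists>y\<in>F_sqrt_1_plus_sq. y\<^sup>2 = 1 + x\<^sup>2"
proof
  show "(csqrt (1 + x\<^sup>2))\<^sup>2 = 1 + x\<^sup>2" by simp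
  show "csqrt (1 + x\<^sup>2) \<in> F_sqrt_1_plus_sq"
    unfolding F_sqrt_1_plus_sq_def
  proof
    fix G assume G: "G \<in> {F. is_subfield F \<and> (\<forall>x\<in>F. \<exists>y\<in>F. y\<^sup>2 = 1 + x\<^sup>2)}"
    then obtain y where "y \<in> G" "y\<^sup>2 = (csqrt (1 + x\<^sup>2))\<^sup>2"
      using assms unfolding F_sqrt_1_plus_sq_def by auto
    then show "csqrt (1 + x\<^sup>2) \<in> G" using G is_subfield_square_root_mem by blast
  qed
qed

lemma real_pythagorean_field_of_real_preimage:
  assumes F: "is_subfield F" and sqrt: "\<forall>x\<in>F. \<exists>y\<in>F. y\<^sup>2 = 1 + x\<^sup>2"
  shows "real_pythagorean_field {r. complex_of_real r \<in> F}"
proof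
  fix x assume "x \<in> {r. complex_of_real r \<in> F}"
  then obtain y where "y \<in> F" "y\<^sup>2 = (complex_of_real (sqrt (1 + x\<^sup>2)))\<^sup>2"
    using sqrt by (auto simp flip: of_real_power)
  then show "sqrt (1 + x\<^sup>2) \<in> {r. complex_of_real r \<in> F}"
    using is_subfield_square_root_mem[OF F] by blast
qed (use F in \<open>auto simp: is_subfield_def of_real_inverse\<close>)

lemma is_subfield_of_real_image:
  assumes "real_pythagorean_field K"
  shows "is_subfield (complex_of_real ` K)"
  using real_pythagorean_field.diff_mem[OF assms] real_pythagorean_field.inverse_mem[OF assms]
  unfolding is_subfield_def
  by (auto simp: real_pythagorean_field.zero_mem[OF assms] real_pythagorean_field.one_mem[OF assms]
      real_pythagorean_field.add_mem[OF assms] real_pythagorean_field.mult_mem[OF assms]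
      simp flip: of_real_add of_real_diff of_real_mult of_real_inverse)

lemma of_real_image_has_sqrt:
  assumes "real_pythagorean_field K" "x \<in> complex_of_real ` K"
  shows "\<exists>y\<in>complex_of_real ` K. y\<^sup>2 = 1 + x\<^sup>2"
proof -
  obtain r where "r \<in> K" "x = complex_of_real r" using assms(2) by blast
  then show ?thesis
    using real_pythagorean_field.sqrt_1_plus_sq_mem[OF assms(1)]
    by (intro bexI[of _ "complex_of_real (sqrt (1 + r\<^sup>2))"]) (auto simp flip: of_real_power)
qed

theorem mainTheorem4:
  shows "complex_of_real ` origami_numbers = F_sqrt_1_plus_sq"
proof
  have "real_pythagorean_field {r. complex_of_real r \<in> F_sqrt_1_plus_sq}"
    using is_subfield_F_sqrt_1_plus_sq F_sqrt_1_plus_sq_has_sqrt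
    by (intro real_pythagorean_field_of_real_preimage) auto
  then have "origami_numbers \<subseteq> {r. complex_of_real r \<in> F_sqrt_1_plus_sq}"
    by (rule real_pythagorean_field.origami_numbers_subset)
  then show "complex_of_real ` origami_numbers \<subseteq> F_sqrt_1_plus_sq" by blast
  show "F_sqrt_1_plus_sq \<subseteq> complex_of_real ` origami_numbers"
    unfolding F_sqrt_1_plus_sq_def
    using is_subfield_of_real_image of_real_image_has_sqrt
      real_pythagorean_field_origami_numbers
    by (intro Inter_lower) auto
qed

end
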